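(* For every integer $n>1$, there exist thresholds $0<\tau_-(n)<\tau_+(n)<\infty$ such that for every $\tau<\tau_-(n)$ (respectively $\tau>\tau_+(n)$), the function $f_{n,\tau}\colon[1,n-1]\to\mathbb{R}$ defined by $f_{n,\tau}(x)=(x+1)\log\big(n-x-1+e^{1/\tau}+xe^{-1/(\tau x)}\big)$ is strictly concave (respectively strictly convex). *)

theory Defs
  imports "HOL-Analysis.Analysis"
begin

definition strict_convex_on :: "real set \<Rightarrow> (real \<Rightarrow> real) \<Rightarrow> bool" where
  "strict_convex_on S f \<longleftrightarrow> convex S \<and>
     (\<forall>x\<in>S. \<forall>y\<in>S. \<forall>t::real. x \<noteq> y \<and> 0 < t \<and> t < 1 \<longrightarrow>
        f ((1 - t) * x + t * y) < (1 - t) * f x + t * f y)"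

definition strict_concave_on :: "real set \<Rightarrow> (real \<Rightarrow> real) \<Rightarrow> bool" where
  "strict_concave_on S f \<longleftrightarrow> strict_convex_on S (\<lambda>x. - f x)"

definition f_fun :: "nat \<Rightarrow> real \<Rightarrow> real \<Rightarrow> real" where
  "f_fun n \<tau> x = (x + 1) * ln (real n - x - 1 + exp (1 / \<tau>) + x * exp (- 1 / (\<tau> * x)))"

end

theory Submission
  imports Defs
begin

text \<open>
  With \<open>a = 1 / \<tau>\<close> the function is \<open>f x = (x + 1) ln (g x)\<close>, where
  \<open>g x = n - x - 1 + exp a + x exp (- a / x) \<ge> 1\<close> on \<open>[1, n - 1]\<close>. Writing \<open>b = a / x\<close>,
  one has \<open>g' = - exp_gap b\<close> and \<open>g'' = exp (- b) b\<^sup>2 / x\<close>, and \<open>f''\<close> has the sign of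
  \<open>g (2 g' + (x + 1) g'') - (x + 1) g'\<^sup>2\<close>.
  If \<open>\<tau> < 1 / (3 (n - 1))\<close> then \<open>b > 3\<close>, so \<open>exp (- b) (1 + b + b\<^sup>2) < 1\<close>; this makes
  \<open>2 g' + (x + 1) g''\<close> negative and hence \<open>f'' < 0\<close>.
  If \<open>\<tau> \<ge> 4\<close> then \<open>b x = a \<le> 1/4\<close>; now \<open>0 \<le> exp_gap b \<le> b\<^sup>2 / 2\<close> and \<open>exp (- b) \<ge> 1 - b\<close>
  give \<open>2 g' + (x + 1) g'' \<ge> b\<^sup>2 / (2 x)\<close>, which dominates \<open>(x + 1) g'\<^sup>2 \<le> x b\<^sup>4 / 2\<close>,
  so \<open>f'' > 0\<close>.
\<close>

lemma strict_convex_onI_less: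
  fixes f :: "real \<Rightarrow> real"
  assumes "convex S"
    and less: "\<And>x y t. x \<in> S \<Longrightarrow> y \<in> S \<Longrightarrow> x < y \<Longrightarrow> 0 < t \<Longrightarrow> t < 1 \<Longrightarrow>
      f ((1 - t) * x + t * y) < (1 - t) * f x + t * f y"
  shows "strict_convex_on S f"
  unfolding strict_convex_on_def
proof (intro conjI ballI allI impI \<open>convex S\<close>)
  fix x y t :: real assume xy: "x \<in> S" "y \<in> S" and t: "x \<noteq> y \<and> 0 < t \<and> t < 1"
  show "f ((1 - t) * x + t * y) < (1 - t) * f x + t * f y"
  proof (cases "x < y")
    case True
    then show ?thesis using less xy t by blast
  next
    case False
    then have "f ((1 - (1 - t)) * y + (1 - t) * x) < (1 - (1 - t)) * f y + (1 - t) * f x"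
      using less[of y x "1 - t"] xy t by force
    then show ?thesis by (simp add: algebra_simps)
  qed
qed

lemma convex_real_Icc_subset:
  fixes S :: "real set"
  assumes "convex S" "x \<in> S" "y \<in> S"
  shows "{x..y} \<subseteq> S"
proof
  fix z assume "z \<in> {x..y}"
  then show "z \<in> S"
    using assms mem_is_interval_1_I[of S x y z] by (simp add: is_interval_convex_1)
qed

lemma strict_convex_on_if_deriv_strict_mono:
  fixes f f' :: "real \<Rightarrow> real"
  assumes "convex S"
    and deriv: "\<And>x. x \<in> S \<Longrightarrow> (f has_real_derivative f' x) (at x)"
    and mono: "strict_mono_on S f'"
  shows "strict_convex_on S f"
proof (rule strict_convex_onI_less[OF \<open>convex S\<close>])
  fix x y t :: real
  assume x: "x \<in> S" and y: "y \<in> S" and "x < y" "0 < t" "t < 1"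
  define z where "z = (1 - t) * x + t * y"
  have z_x: "z - x = t * (y - x)"
    unfolding z_def by (simp add: algebra_simps)
  have y_z: "y - z = (1 - t) * (y - x)"
    unfolding z_def by (simp add: algebra_simps)
  have "0 < t * (y - x)" "0 < (1 - t) * (y - x)"
    using \<open>x < y\<close> \<open>0 < t\<close> \<open>t < 1\<close> by simp_all
  then have "x < z" "z < y"
    by (simp_all flip: z_x y_z)
  have sub: "{x..y} \<subseteq> S" using convex_real_Icc_subset[OF \<open>convex S\<close> x y] .
  have der: "(f has_real_derivative f' w) (at w)" if "x \<le> w" "w \<le> y" for w
    using deriv sub that by auto
  have "\<exists>p. x < p \<and> p < z \<and> f z - f x = (z - x) * f' p"
    by (rule MVT2[of x z f f']) (use der \<open>x < z\<close> \<open>z < y\<close> in auto)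
  then obtain p where p: "x < p" "p < z" "f z - f x = (z - x) * f' p" by blast
  have "\<exists>q. z < q \<and> q < y \<and> f y - f z = (y - z) * f' q"
    by (rule MVT2[of z y f f']) (use der \<open>x < z\<close> \<open>z < y\<close> in auto)
  then obtain q where q: "z < q" "q < y" "f y - f z = (y - z) * f' q" by blast
  have "f' p < f' q"
    using sub p q \<open>x < z\<close> \<open>z < y\<close> by (intro strict_mono_onD[OF mono]) auto
  have "(1 - t) * f x + t * f y - f z = t * (f y - f z) - (1 - t) * (f z - f x)"
    by algebra
  also have "\<dots> = t * (1 - t) * (y - x) * (f' q - f' p)"
    by (simp only: p(3) q(3) z_x y_z) (simp add: algebra_simps)
  finally have gap: "(1 - t) * f x + t * f y - f z = t * (1 - t) * (y - x) * (f' q - f' p)" .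
  have "0 < t * (1 - t) * (y - x) * (f' q - f' p)"
    using \<open>f' p < f' q\<close> \<open>x < y\<close> \<open>0 < t\<close> \<open>t < 1\<close> by simp
  with gap show "f ((1 - t) * x + t * y) < (1 - t) * f x + t * f y"
    unfolding z_def by linarith
qed

lemma strict_convex_on_if_second_deriv_pos:
  fixes f f' f'' :: "real \<Rightarrow> real"
  assumes "convex S"
    and "\<And>x. x \<in> S \<Longrightarrow> (f has_real_derivative f' x) (at x)"
    and "\<And>x. x \<in> S \<Longrightarrow> (f' has_real_derivative f'' x) (at x)"
    and "\<And>x. x \<in> S \<Longrightarrow> 0 < f'' x"
  shows "strict_convex_on S f"
proof (rule strict_convex_on_if_deriv_strict_mono[OF assms(1,2)])
  show "strict_mono_on S f'"
  proof (rule strict_mono_onI)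
    fix x y assume "x \<in> S" "y \<in> S" "x < y"
    then have "{x..y} \<subseteq> S" using convex_real_Icc_subset[OF \<open>convex S\<close>] by blast
    then show "f' x < f' y"
      using DERIV_pos_imp_increasing[OF \<open>x < y\<close>] assms(3,4) by (meson atLeastAtMost_iff subsetD)
  qed
qed

lemma strict_concave_on_if_second_deriv_neg:
  fixes f f' f'' :: "real \<Rightarrow> real"
  assumes "convex S"
    and "\<And>x. x \<in> S \<Longrightarrow> (f has_real_derivative f' x) (at x)"
    and "\<And>x. x \<in> S \<Longrightarrow> (f' has_real_derivative f'' x) (at x)"
    and "\<And>x. x \<in> S \<Longrightarrow> f'' x < 0"
  shows "strict_concave_on S f"
  unfolding strict_concave_on_def
  using strict_convex_on_if_second_deriv_pos[of S "\<lambda>x. - f x" "\<lambda>x. - f' x" "\<lambda>x. - f'' x"]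
    assms DERIV_minus by fastforce

lemma DERIV_plus_one_mult_ln:
  fixes g :: "real \<Rightarrow> real"
  assumes "(g has_real_derivative g' x) (at x)" "0 < g x"
  shows "((\<lambda>x. (x + 1) * ln (g x)) has_real_derivative ln (g x) + (x + 1) * g' x / g x) (at x)"
  using assms by (auto intro!: derivative_eq_intros simp: field_simps)

lemma DERIV_plus_one_mult_ln_deriv:
  fixes g :: "real \<Rightarrow> real"
  assumes "(g has_real_derivative g' x) (at x)" "(g' has_real_derivative g'' x) (at x)" "0 < g x"
  shows "((\<lambda>x. ln (g x) + (x + 1) * g' x / g x) has_real_derivative
           (g x * (2 * g' x + (x + 1) * g'' x) - (x + 1) * (g' x)^2) / (g x)^2) (at x)"
  using assms by (auto intro!: derivative_eq_intros simp: field_simps power2_eq_square)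

lemma strict_convex_on_plus_one_mult_ln:
  fixes g g' g'' :: "real \<Rightarrow> real"
  assumes "convex S"
    and "\<And>x. x \<in> S \<Longrightarrow> 0 < g x"
    and "\<And>x. x \<in> S \<Longrightarrow> (g has_real_derivative g' x) (at x)"
    and "\<And>x. x \<in> S \<Longrightarrow> (g' has_real_derivative g'' x) (at x)"
    and "\<And>x. x \<in> S \<Longrightarrow> 0 < g x * (2 * g' x + (x + 1) * g'' x) - (x + 1) * (g' x)^2"
  shows "strict_convex_on S (\<lambda>x. (x + 1) * ln (g x))"
proof (rule strict_convex_on_if_second_deriv_pos[OF \<open>convex S\<close>])
  fix x assume x: "x \<in> S"
  show "((\<lambda>x. (x + 1) * ln (g x)) has_real_derivative ln (g x) + (x + 1) * g' x / g x) (at x)"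
    using assms(3,2)[OF x] by (rule DERIV_plus_one_mult_ln)
  show "((\<lambda>x. ln (g x) + (x + 1) * g' x / g x) has_real_derivative
           (g x * (2 * g' x + (x + 1) * g'' x) - (x + 1) * (g' x)^2) / (g x)^2) (at x)"
    using assms(3,4,2)[OF x] by (rule DERIV_plus_one_mult_ln_deriv)
  show "0 < (g x * (2 * g' x + (x + 1) * g'' x) - (x + 1) * (g' x)^2) / (g x)^2"
    using assms(2,5)[OF x] by (intro divide_pos_pos) auto
qed

lemma strict_concave_on_plus_one_mult_ln:
  fixes g g' g'' :: "real \<Rightarrow> real"
  assumes "convex S"
    and "\<And>x. x \<in> S \<Longrightarrow> 0 < g x"
    and "\<And>x. x \<in> S \<Longrightarrow> (g has_real_derivative g' x) (at x)"
    and "\<And>x. x \<in> S \<Longrightarrow> (g' has_real_derivative g'' x) (at x)"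
    and "\<And>x. x \<in> S \<Longrightarrow> g x * (2 * g' x + (x + 1) * g'' x) - (x + 1) * (g' x)^2 < 0"
  shows "strict_concave_on S (\<lambda>x. (x + 1) * ln (g x))"
proof (rule strict_concave_on_if_second_deriv_neg[OF \<open>convex S\<close>])
  fix x assume x: "x \<in> S"
  show "((\<lambda>x. (x + 1) * ln (g x)) has_real_derivative ln (g x) + (x + 1) * g' x / g x) (at x)"
    using assms(3,2)[OF x] by (rule DERIV_plus_one_mult_ln)
  show "((\<lambda>x. ln (g x) + (x + 1) * g' x / g x) has_real_derivative
           (g x * (2 * g' x + (x + 1) * g'' x) - (x + 1) * (g' x)^2) / (g x)^2) (at x)"
    using assms(3,4,2)[OF x] by (rule DERIV_plus_one_mult_ln_deriv)
  show "(g x * (2 * g' x + (x + 1) * g'' x) - (x + 1) * (g' x)^2) / (g x)^2 < 0"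
    using assms(2,5)[OF x] by (intro divide_neg_pos) auto
qed

lemma exp_ge_Taylor_cubic:
  fixes x :: real
  shows "1 + x + x^2 / 2 + x^3 / 6 \<le> exp x"
proof -
  obtain t where "exp x = (\<Sum>m<4. x ^ m / fact m) + exp t / fact 4 * x ^ 4"
    using Maclaurin_exp_le[of x 4] by blast
  moreover have "0 \<le> exp t / fact 4 * x ^ 4" by simp
  ultimately show ?thesis by (simp add: eval_nat_numeral fact_numeral)
qed

lemma exp_gt_one_plus_x_plus_sq:
  fixes x :: real
  assumes "3 < x"
  shows "1 + x + x^2 < exp x"
proof -
  have "3 * x^2 < x * x^2" using assms by simp
  then have "x^2 / 2 < x^3 / 6" by (simp add: power3_eq_cube power2_eq_square)
  then show ?thesis using exp_ge_Taylor_cubic[of x] by linarith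
qed

definition exp_gap :: "real \<Rightarrow> real" where
  "exp_gap b = 1 - exp (- b) * (1 + b)"

lemma exp_gap_nonneg: "0 \<le> exp_gap b"
proof -
  have "exp (- b) * (1 + b) \<le> exp (- b) * exp b" by simp
  then show ?thesis by (simp add: exp_gap_def exp_minus)
qed

lemma exp_gap_le_half_sq:
  assumes "0 \<le> b" "b \<le> 2"
  shows "exp_gap b \<le> b^2 / 2"
proof -
  have "1 - b + b^2 / 2 - b^3 / 6 \<le> exp (- b)" using exp_ge_Taylor_cubic[of "- b"] by simp
  then have "(1 - b + b^2 / 2 - b^3 / 6) * (1 + b) \<le> exp (- b) * (1 + b)"
    using assms by (intro mult_right_mono) auto
  moreover have "(1 - b + b^2 / 2 - b^3 / 6) * (1 + b) = 1 - b^2 / 2 + b^3 / 3 - b^4 / 6"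
    by (simp add: field_simps power2_eq_square power3_eq_cube power4_eq_xxxx)
  moreover have "b * b^3 \<le> 2 * b^3" using assms by (intro mult_right_mono) auto
  then have "b^4 / 6 \<le> b^3 / 3" by (simp add: power_numeral_reduce)
  ultimately show ?thesis unfolding exp_gap_def by linarith
qed

lemma DERIV_exp_gap: "(exp_gap has_real_derivative b * exp (- b)) (at b)"
  unfolding exp_gap_def[abs_def] by (auto intro!: derivative_eq_intros simp: algebra_simps)

lemma convexity_numerator_pos:
  fixes x b g :: real
  assumes "1 \<le> x" "0 < b" "b * x \<le> 1/4" "1 \<le> g"
  shows "0 < g * (2 * - exp_gap b + (x + 1) * (exp (- b) * b^2 / x)) - (x + 1) * (- exp_gap b)^2"
proof -
  define M where "M = 2 * - exp_gap b + (x + 1) * (exp (- b) * b^2 / x)"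
  have "0 < x" using assms by simp
  have "b * 1 \<le> b * x" using assms by (intro mult_left_mono) auto
  then have "b \<le> 1/4" using assms by linarith
  have "(x + 1) * b^2 / x * (1 - b) \<le> (x + 1) * b^2 / x * exp (- b)"
    using \<open>0 < x\<close> exp_ge_add_one_self[of "- b"] by (intro mult_left_mono) auto
  moreover have "2 * exp_gap b \<le> b^2"
    using exp_gap_le_half_sq[of b] assms \<open>b \<le> 1/4\<close> by simp
  ultimately have "(x + 1) * b^2 / x * (1 - b) - b^2 \<le> M"
    unfolding M_def by (simp add: field_simps)
  moreover have "(x + 1) * b^2 / x * (1 - b) - b^2 = b^2 / x * (1 - b - b * x)"
    using \<open>0 < x\<close> by (simp add: field_simps power2_eq_square)
  moreover have "b^2 / x * (1/2) \<le> b^2 / x * (1 - b - b * x)"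
    using assms \<open>b \<le> 1/4\<close> \<open>0 < x\<close> by (intro mult_left_mono) auto
  ultimately have M_lower: "b^2 / (2 * x) \<le> M" by simp
  have "0 < b^2 / (2 * x)" using assms \<open>0 < x\<close> by simp
  have "(x + 1) * (exp_gap b)^2 \<le> (2 * x) * (b^2 / 2)^2"
    using assms exp_gap_nonneg[of b] exp_gap_le_half_sq[of b] \<open>b \<le> 1/4\<close>
    by (intro mult_mono power_mono) auto
  also have "\<dots> = b^2 / (2 * x) * (b * x)^2"
    using \<open>0 < x\<close> by (simp add: field_simps power2_eq_square)
  also have "\<dots> < b^2 / (2 * x)"
  proof -
    have "(b * x)^2 \<le> (1/4)^2" using assms by (intro power_mono) auto
    then have "(b * x)^2 < 1" by (simp add: power2_eq_square)
    from mult_strict_left_mono[OF this \<open>0 < b^2 / (2 * x)\<close>] show ?thesis by simp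
  qed
  also have "\<dots> \<le> M" by (rule M_lower)
  also have "\<dots> \<le> g * M"
  proof -
    have "0 \<le> M" using M_lower \<open>0 < b^2 / (2 * x)\<close> by linarith
    from mult_right_mono[OF \<open>1 \<le> g\<close> this] show ?thesis by simp
  qed
  finally show ?thesis unfolding M_def by simp
qed

lemma concavity_numerator_neg:
  fixes x b g :: real
  assumes "1 \<le> x" "3 < b" "0 < g"
  shows "g * (2 * - exp_gap b + (x + 1) * (exp (- b) * b^2 / x)) - (x + 1) * (- exp_gap b)^2 < 0"
proof -
  have "exp (- b) * (1 + b + b^2) < exp (- b) * exp b"
    using exp_gt_one_plus_x_plus_sq[OF \<open>3 < b\<close>] by simp
  then have small: "exp (- b) * (1 + b + b^2) < 1" by (simp add: exp_minus)
  have "(x + 1) / x \<le> 2" using assms by (simp add: field_simps)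
  then have "(x + 1) / x * (exp (- b) * b^2) \<le> 2 * (exp (- b) * b^2)"
    by (intro mult_right_mono) auto
  then have "2 * - exp_gap b + (x + 1) * (exp (- b) * b^2 / x) < 0"
    using small by (simp add: exp_gap_def algebra_simps)
  then have "g * (2 * - exp_gap b + (x + 1) * (exp (- b) * b^2 / x)) < 0"
    using \<open>0 < g\<close> by (simp add: mult_pos_neg)
  moreover have "0 \<le> (x + 1) * (- exp_gap b)^2" using assms by simp
  ultimately show ?thesis by linarith
qed

definition log_arg :: "nat \<Rightarrow> real \<Rightarrow> real \<Rightarrow> real" where
  "log_arg n a x = real n - x - 1 + exp a + x * exp (- a / x)"

lemma f_fun_eq_log_arg: "f_fun n \<tau> = (\<lambda>x. (x + 1) * ln (log_arg n (1 / \<tau>) x))"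
  unfolding f_fun_def log_arg_def by (simp add: field_simps)

lemma log_arg_ge_one:
  assumes "0 \<le> a" "0 \<le> x" "x \<le> real n - 1"
  shows "1 \<le> log_arg n a x"
proof -
  have "1 \<le> exp a" "0 \<le> x * exp (- a / x)" using assms by simp_all
  then show ?thesis unfolding log_arg_def using assms by linarith
qed

lemma DERIV_log_arg:
  assumes "x \<noteq> 0"
  shows "(log_arg n a has_real_derivative - exp_gap (a / x)) (at x)"
  unfolding log_arg_def[abs_def] exp_gap_def using assms
  by (auto intro!: derivative_eq_intros simp: field_simps power2_eq_square)

lemma DERIV_minus_exp_gap_div:
  assumes "x \<noteq> 0"
  shows "((\<lambda>x. - exp_gap (a / x)) has_real_derivative exp (- (a / x)) * (a / x)^2 / x) (at x)"
proof -
  have "((\<lambda>x. a / x) has_real_derivative - a / x^2) (at x)"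
    using assms by (auto intro!: derivative_eq_intros simp: power2_eq_square)
  from DERIV_minus[OF DERIV_chain2[OF DERIV_exp_gap this]] show ?thesis
    by (rule DERIV_cong) (use assms in \<open>simp add: field_simps power2_eq_square\<close>)
qed

lemma strict_convex_on_f_fun:
  assumes "4 \<le> \<tau>"
  shows "strict_convex_on {1 .. real n - 1} (f_fun n \<tau>)"
proof -
  define a where "a = 1 / \<tau>"
  have "0 < a" "a \<le> 1/4" using assms by (simp_all add: a_def field_simps)
  have "strict_convex_on {1 .. real n - 1} (\<lambda>x. (x + 1) * ln (log_arg n a x))"
  proof (rule strict_convex_on_plus_one_mult_ln[where g' = "\<lambda>x. - exp_gap (a / x)"
        and g'' = "\<lambda>x. exp (- (a / x)) * (a / x)^2 / x"])
    fix x assume "x \<in> {1 .. real n - 1}"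
    then have "1 \<le> x" "x \<le> real n - 1" by simp_all
    then have g: "1 \<le> log_arg n a x" using log_arg_ge_one \<open>0 < a\<close> by simp
    then show "0 < log_arg n a x" by simp
    show "(log_arg n a has_real_derivative - exp_gap (a / x)) (at x)"
      using \<open>1 \<le> x\<close> by (intro DERIV_log_arg) simp
    show "((\<lambda>x. - exp_gap (a / x)) has_real_derivative exp (- (a / x)) * (a / x)^2 / x) (at x)"
      using \<open>1 \<le> x\<close> by (intro DERIV_minus_exp_gap_div) simp
    have "a / x * x \<le> 1/4" using \<open>1 \<le> x\<close> \<open>a \<le> 1/4\<close> by simp
    then show "0 < log_arg n a x * (2 * - exp_gap (a / x) + (x + 1) * (exp (- (a / x)) * (a / x)^2 / x))
        - (x + 1) * (- exp_gap (a / x))^2"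
      using \<open>1 \<le> x\<close> \<open>0 < a\<close> g by (intro convexity_numerator_pos) simp_all
  qed simp
  then show ?thesis by (simp add: f_fun_eq_log_arg a_def)
qed

lemma strict_concave_on_f_fun:
  assumes "0 < \<tau>" "\<tau> < 1 / (3 * (real n - 1))"
  shows "strict_concave_on {1 .. real n - 1} (f_fun n \<tau>)"
proof -
  define a where "a = 1 / \<tau>"
  have "0 < 3 * (real n - 1)"
  proof (rule ccontr)
    assume "\<not> 0 < 3 * (real n - 1)"
    then have "1 / (3 * (real n - 1)) \<le> 0" by (intro divide_nonneg_nonpos) auto
    with assms show False by linarith
  qed
  then have "3 * (real n - 1) < a" using assms by (simp add: a_def field_simps)
  have "strict_concave_on {1 .. real n - 1} (\<lambda>x. (x + 1) * ln (log_arg n a x))"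
  proof (rule strict_concave_on_plus_one_mult_ln[where g' = "\<lambda>x. - exp_gap (a / x)"
        and g'' = "\<lambda>x. exp (- (a / x)) * (a / x)^2 / x"])
    fix x assume "x \<in> {1 .. real n - 1}"
    then have "1 \<le> x" "x \<le> real n - 1" by simp_all
    then have g: "1 \<le> log_arg n a x"
      using log_arg_ge_one \<open>3 * (real n - 1) < a\<close> \<open>0 < 3 * (real n - 1)\<close> by simp
    then show "0 < log_arg n a x" by simp
    show "(log_arg n a has_real_derivative - exp_gap (a / x)) (at x)"
      using \<open>1 \<le> x\<close> by (intro DERIV_log_arg) simp
    show "((\<lambda>x. - exp_gap (a / x)) has_real_derivative exp (- (a / x)) * (a / x)^2 / x) (at x)"
      using \<open>1 \<le> x\<close> by (intro DERIV_minus_exp_gap_div) simp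
    have "3 * x < a" using \<open>x \<le> real n - 1\<close> \<open>3 * (real n - 1) < a\<close> by simp
    then have "3 < a / x" using \<open>1 \<le> x\<close> by (simp add: field_simps)
    then show "log_arg n a x * (2 * - exp_gap (a / x) + (x + 1) * (exp (- (a / x)) * (a / x)^2 / x))
        - (x + 1) * (- exp_gap (a / x))^2 < 0"
      using \<open>1 \<le> x\<close> g by (intro concavity_numerator_neg) simp_all
  qed simp
  then show ?thesis by (simp add: f_fun_eq_log_arg a_def)
qed

theorem lemma15:
  fixes n :: nat
  assumes "n > 1"
  shows "\<exists>\<tau>m \<tau>p :: real. 0 < \<tau>m \<and> \<tau>m < \<tau>p \<and>
           (\<forall>\<tau>. 0 < \<tau> \<and> \<tau> < \<tau>m \<longrightarrow> strict_concave_on {1 .. real n - 1} (f_fun n \<tau>)) \<and>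
           (\<forall>\<tau>. \<tau> > \<tau>p \<longrightarrow> strict_convex_on {1 .. real n - 1} (f_fun n \<tau>))"
proof (intro exI conjI allI impI)
  have "3 \<le> 3 * (real n - 1)" using assms by simp
  then show "0 < 1 / (3 * (real n - 1))" and "1 / (3 * (real n - 1)) < 4"
    by (simp_all add: field_simps)
  show "strict_concave_on {1 .. real n - 1} (f_fun n \<tau>)"
    if "0 < \<tau> \<and> \<tau> < 1 / (3 * (real n - 1))" for \<tau>
    using that strict_concave_on_f_fun by blast
  show "strict_convex_on {1 .. real n - 1} (f_fun n \<tau>)" if "4 < \<tau>" for \<tau>
    using that strict_convex_on_f_fun by simp
qed

end
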